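(* Let $S(t,p,q)=\sum_{\pi}t^{|\pi|}p^{\mathrm{asc}(\pi)}q^{\mathrm{des}(\pi)}$, summed over all separable permutations $\pi$, and let $I(t,p,q)$ be the same sum restricted to irreducible separable permutations. Then $$pq\,S(t,p,q)^3+pq\,t\,S(t,p,q)^2+S(t,p,q)\bigl((p+q)t-1\bigr)+t=0$$ and $$I(t,p,q)=\frac{t+q\,(t+S(t,p,q))\,S(t,p,q)}{1+q\,S(t,p,q)}.$$
   Context: A permutation of length $n$ is a word $\pi=\pi_1\cdots\pi_n$ containing each element of $[n]$ exactly once; $|\pi|=n$. For $\pi$ of length $m$ and $\sigma$ of length $n$, $\pi\oplus\sigma=\pi_1\cdots\pi_m(\sigma_1+m)\cdots(\sigma_n+m)$ and $\pi\ominus\sigma=(\pi_1+n)\cdots(\pi_m+n)\sigma_1\cdots\sigma_n$. Separable permutations are the permutations of length $\ge1$ obtained from the permutation $1$ by repeatedly applying $\oplus$ and $\ominus$ (equivalently, those avoiding $2413$ and $3142$). The permutation $1$ is irreducible; a permutation of length $n\ge2$ is irreducible if there is no $i$ with $2\le i\le n$ such that every element of $\pi_1\cdots\pi_{i-1}$ is less than every element of $\pi_i\cdots\pi_n$. $\mathrm{asc}(\pi)=\#\{i<n:\pi_i<\pi_{i+1}\}$, $\mathrm{des}(\pi)=\#\{i<n:\pi_i>\pi_{i+1}\}$. *)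

theory Defs
  imports "HOL-Computational_Algebra.Formal_Power_Series"
begin

definition is_perm :: "nat list \<Rightarrow> bool" where
  "is_perm xs \<longleftrightarrow> distinct xs \<and> set xs = {1..length xs}"

definition dsum :: "nat list \<Rightarrow> nat list \<Rightarrow> nat list" where
  "dsum xs ys = xs @ map (\<lambda>y. y + length xs) ys"

definition skewsum :: "nat list \<Rightarrow> nat list \<Rightarrow> nat list" where
  "skewsum xs ys = map (\<lambda>x. x + length ys) xs @ ys"

inductive separable :: "nat list \<Rightarrow> bool" where
  sep_one: "separable [1]"
| sep_dsum: "separable xs \<Longrightarrow> separable ys \<Longrightarrow> separable (dsum xs ys)"
| sep_skew: "separable xs \<Longrightarrow> separable ys \<Longrightarrow> separable (skewsum xs ys)"

definition irreducible_perm :: "nat list \<Rightarrow> bool" where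
  "irreducible_perm xs \<longleftrightarrow> xs = [1] \<or>
     (length xs \<ge> 2 \<and>
      \<not> (\<exists>i. 2 \<le> i \<and> i \<le> length xs \<and>
            (\<forall>a\<in>set (take (i - 1) xs). \<forall>b\<in>set (drop (i - 1) xs). a < b)))"

definition asc :: "nat list \<Rightarrow> nat" where
  "asc xs = card {i. Suc i < length xs \<and> xs ! i < xs ! Suc i}"

definition des :: "nat list \<Rightarrow> nat" where
  "des xs = card {i. Suc i < length xs \<and> xs ! i > xs ! Suc i}"

definition sep_gf :: "'a::comm_ring_1 \<Rightarrow> 'a \<Rightarrow> 'a fps" where
  "sep_gf p q = Abs_fps (\<lambda>n. \<Sum>xs\<in>{xs. separable xs \<and> length xs = n}.
                                 p ^ asc xs * q ^ des xs)"

definition irr_sep_gf :: "'a::comm_ring_1 \<Rightarrow> 'a \<Rightarrow> 'a fps" where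
  "irr_sep_gf p q = Abs_fps (\<lambda>n. \<Sum>xs\<in>{xs. separable xs \<and> irreducible_perm xs \<and> length xs = n}.
                                 p ^ asc xs * q ^ des xs)"

end

theory Submission
  imports Defs
begin

(* A separable permutation other than 1 is a direct sum or a skew sum.  One that is not
   irreducible splits uniquely as a (+) b with a irreducible and b separable, and the junction
   adds exactly one ascent; hence S = I + p I S.  Complementation exchanges (+) with (-) and
   ascents with descents, so S(t,p,q) = S(t,q,p), while J = I(t,q,p) counts the separable
   permutations with irreducible complement and satisfies S = J + q J S.  Every separable
   permutation is irreducible or has an irreducible complement, and only 1 has both, so
   I + J = S + t.  Eliminating I and J from these three equations gives both identities. *)

unbundle fps_syntax

fun adj_count :: "('a \<Rightarrow> 'a \<Rightarrow> bool) \<Rightarrow> 'a list \<Rightarrow> nat" where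
  "adj_count R (x # y # zs) = (if R x y then 1 else 0) + adj_count R (y # zs)"
| "adj_count R _ = 0"

lemma card_adjacent_eq_adj_count:
  "card {i. Suc i < length xs \<and> R (xs ! i) (xs ! Suc i)} = adj_count R xs"
proof (induction R xs rule: adj_count.induct)
  case (1 R x y zs)
  let ?A = "{i. Suc i < length (y # zs) \<and> R ((y # zs) ! i) ((y # zs) ! Suc i)}"
  have "{i. Suc i < length (x # y # zs) \<and> R ((x # y # zs) ! i) ((x # y # zs) ! Suc i)}
      = (if R x y then {0} else {}) \<union> Suc ` ?A" (is "?L = _")
  proof (intro set_eqI)
    show "i \<in> ?L \<longleftrightarrow> i \<in> (if R x y then {0} else {}) \<union> Suc ` ?A" for i
      by (cases i) auto
  qed
  then show ?case
    using "1.IH" by (simp add: card_image card_insert_if)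
qed simp_all

lemma adj_count_append:
  "xs \<noteq> [] \<Longrightarrow> ys \<noteq> [] \<Longrightarrow>
   adj_count R (xs @ ys) = adj_count R xs + adj_count R ys + (if R (last xs) (hd ys) then 1 else 0)"
proof (induction R xs rule: adj_count.induct)
  case ("2_2" R x)
  then show ?case by (cases ys) auto
qed simp_all

lemma adj_count_map:
  "(\<And>a b. a \<in> set xs \<Longrightarrow> b \<in> set xs \<Longrightarrow> R (f a) (f b) = R' a b) \<Longrightarrow>
   adj_count R (map f xs) = adj_count R' xs"
  by (induction R' xs rule: adj_count.induct) auto

lemma asc_eq_adj_count: "asc xs = adj_count (<) xs"
  unfolding asc_def card_adjacent_eq_adj_count ..

lemma des_eq_adj_count: "des xs = adj_count (>) xs"
  unfolding des_def card_adjacent_eq_adj_count[symmetric] by simp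

lemma is_perm_bounds: "is_perm xs \<Longrightarrow> x \<in> set xs \<Longrightarrow> 1 \<le> x \<and> x \<le> length xs"
  unfolding is_perm_def by auto

lemma is_perm_dsum: "is_perm xs \<Longrightarrow> is_perm ys \<Longrightarrow> is_perm (dsum xs ys)"
  unfolding is_perm_def dsum_def by (auto simp: distinct_map inj_on_def)

lemma is_perm_skewsum: "is_perm xs \<Longrightarrow> is_perm ys \<Longrightarrow> is_perm (skewsum xs ys)"
  unfolding is_perm_def skewsum_def by (auto simp: distinct_map inj_on_def)

lemma separable_is_perm: "separable xs \<Longrightarrow> is_perm xs"
proof (induction rule: separable.induct)
  case sep_one
  show ?case by (simp add: is_perm_def)
qed (simp_all add: is_perm_dsum is_perm_skewsum)

lemma separable_not_Nil: "separable xs \<Longrightarrow> xs \<noteq> []"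
  by (induction rule: separable.induct) (auto simp: dsum_def skewsum_def)

lemma irreducible_perm_not_Nil: "irreducible_perm xs \<Longrightarrow> xs \<noteq> []"
  unfolding irreducible_perm_def by auto

lemma dsum_assoc: "dsum (dsum xs ys) zs = dsum xs (dsum ys zs)"
  by (simp add: dsum_def add.assoc)

lemma asc_dsum:
  assumes "is_perm xs" "is_perm ys" "xs \<noteq> []" "ys \<noteq> []"
  shows "asc (dsum xs ys) = asc xs + asc ys + 1"
proof -
  have "last xs < hd ys + length xs"
    using is_perm_bounds[OF assms(1) last_in_set] is_perm_bounds[OF assms(2) hd_in_set] assms(3,4)
    by force
  then show ?thesis
    using assms(3,4) by (simp add: asc_eq_adj_count dsum_def adj_count_append adj_count_map hd_map)
qed

lemma des_dsum:
  assumes "is_perm xs" "is_perm ys" "xs \<noteq> []" "ys \<noteq> []"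
  shows "des (dsum xs ys) = des xs + des ys"
proof -
  have "last xs < hd ys + length xs"
    using is_perm_bounds[OF assms(1) last_in_set] is_perm_bounds[OF assms(2) hd_in_set] assms(3,4)
    by force
  then show ?thesis
    using assms(3,4) by (simp add: des_eq_adj_count dsum_def adj_count_append adj_count_map hd_map)
qed

lemma irreducible_perm_if_last_less_hd:
  assumes "2 \<le> length xs" "last xs < hd xs"
  shows "irreducible_perm xs"
proof -
  have "\<not> (\<forall>a\<in>set (take (i - 1) xs). \<forall>b\<in>set (drop (i - 1) xs). a < b)"
    if "2 \<le> i" "i \<le> length xs" for i
  proof -
    have "take (i - 1) xs \<noteq> []" "drop (i - 1) xs \<noteq> []"
      using that by auto
    moreover have "hd (take (i - 1) xs) = hd xs" "last (drop (i - 1) xs) = last xs"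
      using that by auto
    ultimately have "hd xs \<in> set (take (i - 1) xs)" "last xs \<in> set (drop (i - 1) xs)"
      by (metis hd_in_set, metis last_in_set)
    then show ?thesis using assms(2) by (meson order.asym)
  qed
  then show ?thesis using assms(1) unfolding irreducible_perm_def by blast
qed

lemma not_irreducible_append:
  assumes "a \<noteq> []" "c \<noteq> []" "\<forall>x\<in>set a. \<forall>y\<in>set c. x < y"
  shows "\<not> irreducible_perm (a @ c)"
proof -
  have "a @ c \<noteq> [1]" "2 \<le> Suc (length a)" "Suc (length a) \<le> length (a @ c)"
    using assms(1,2) by (auto simp: append_eq_Cons_conv Suc_le_eq)
  moreover have "\<forall>x\<in>set (take (Suc (length a) - 1) (a @ c)).
                   \<forall>y\<in>set (drop (Suc (length a) - 1) (a @ c)). x < y"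
    using assms(3) by simp
  ultimately show ?thesis
    unfolding irreducible_perm_def by blast
qed

lemma skewsum_irreducible:
  assumes "is_perm xs" "is_perm ys" "xs \<noteq> []" "ys \<noteq> []"
  shows "irreducible_perm (skewsum xs ys)"
proof (rule irreducible_perm_if_last_less_hd)
  show "2 \<le> length (skewsum xs ys)"
    using assms(3,4) by (cases xs; cases ys) (simp_all add: skewsum_def)
  have "last ys < hd xs + length ys"
    using is_perm_bounds[OF assms(1) hd_in_set] is_perm_bounds[OF assms(2) last_in_set] assms(3,4)
    by force
  then show "last (skewsum xs ys) < hd (skewsum xs ys)"
    using assms(3,4) by (simp add: skewsum_def hd_map)
qed

lemma dsum_not_irreducible:
  assumes "is_perm xs" "is_perm ys" "xs \<noteq> []" "ys \<noteq> []"
  shows "\<not> irreducible_perm (dsum xs ys)"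
  unfolding dsum_def
proof (rule not_irreducible_append)
  show "\<forall>x\<in>set xs. \<forall>y\<in>set (map (\<lambda>y. y + length xs) ys). x < y"
    using is_perm_bounds[OF assms(1)] is_perm_bounds[OF assms(2)] by fastforce
qed (use assms(3,4) in simp_all)

lemma separable_not_irreducible_dsum:
  assumes "separable xs" "\<not> irreducible_perm xs"
  obtains a b where "separable a" "irreducible_perm a" "separable b" "xs = dsum a b"
  using assms
proof (induction arbitrary: thesis rule: separable.induct)
  case sep_one
  then show ?case by (simp add: irreducible_perm_def)
next
  case (sep_dsum u v)
  show ?case
  proof (cases "irreducible_perm u")
    case True
    show ?thesis by (rule sep_dsum.prems(1)[OF sep_dsum.hyps(1) True sep_dsum.hyps(2) refl])
  next
    case False
    then obtain a w where a: "separable a" "irreducible_perm a" and w: "separable w"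
      and u_eq: "u = dsum a w"
      using sep_dsum.IH(1) by blast
    have "separable (dsum w v)" using w sep_dsum.hyps(2) by (rule separable.sep_dsum)
    moreover have "dsum u v = dsum a (dsum w v)" by (simp add: u_eq dsum_assoc)
    ultimately show ?thesis by (rule sep_dsum.prems(1)[OF a])
  qed
next
  case (sep_skew u v)
  have "irreducible_perm (skewsum u v)"
    using sep_skew.hyps by (intro skewsum_irreducible) (simp_all add: separable_is_perm separable_not_Nil)
  with sep_skew.prems(2) show ?case by contradiction
qed

lemma irreducible_dsum_prefix_length_le:
  assumes "irreducible_perm a'" "dsum a b = dsum a' b'" "is_perm a" "a \<noteq> []" "is_perm b"
  shows "length a' \<le> length a"
proof (rule ccontr)
  assume "\<not> length a' \<le> length a"
  then have longer: "length a < length a'" by simp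
  define c where "c = take (length a' - length a) (map (\<lambda>y. y + length a) b)"
  have "a' = take (length a') (dsum a b)"
    using assms(2) by (simp add: dsum_def)
  also have "\<dots> = a @ c"
    using longer by (simp add: dsum_def c_def)
  finally have a'_eq: "a' = a @ c" .
  then have "c \<noteq> []" using longer by auto
  moreover have "\<forall>x\<in>set a. \<forall>y\<in>set c. x < y"
    using is_perm_bounds[OF assms(3)] is_perm_bounds[OF assms(5)]
    by (fastforce simp: c_def dest!: in_set_takeD)
  ultimately show False
    using not_irreducible_append[OF assms(4)] assms(1) a'_eq by blast
qed

lemma dsum_irreducible_inject:
  assumes "irreducible_perm a" "irreducible_perm a'" "is_perm a" "is_perm a'"
    "is_perm b" "is_perm b'" "dsum a b = dsum a' b'"
  shows "a = a' \<and> b = b'"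
proof -
  have "length a = length a'"
    using irreducible_dsum_prefix_length_le[of a' a b b'] irreducible_dsum_prefix_length_le[of a a' b' b]
      assms irreducible_perm_not_Nil by fastforce
  then have "a = a'" and shifted: "map (\<lambda>y. y + length a) b = map (\<lambda>y. y + length a) b'"
    using assms(7) by (simp_all add: dsum_def)
  moreover have "b = b'"
    using shifted inj_map_eq_map[of "\<lambda>y. y + length a"] by (simp add: inj_def)
  ultimately show ?thesis by blast
qed

definition complement :: "nat list \<Rightarrow> nat list" where
  "complement xs = map (\<lambda>x. Suc (length xs) - x) xs"

lemma length_complement [simp]: "length (complement xs) = length xs"
  by (simp add: complement_def)

lemma complement_complement: "is_perm xs \<Longrightarrow> complement (complement xs) = xs"
  by (auto simp: complement_def is_perm_def intro!: map_idI)

lemma complement_dsum: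
  "is_perm xs \<Longrightarrow> is_perm ys \<Longrightarrow> complement (dsum xs ys) = skewsum (complement xs) (complement ys)"
  by (auto simp: complement_def dsum_def skewsum_def is_perm_def)

lemma complement_skewsum:
  "is_perm xs \<Longrightarrow> is_perm ys \<Longrightarrow> complement (skewsum xs ys) = dsum (complement xs) (complement ys)"
  by (auto simp: complement_def dsum_def skewsum_def is_perm_def)

lemma separable_complement: "separable xs \<Longrightarrow> separable (complement xs)"
proof (induction rule: separable.induct)
  case sep_one
  show ?case using separable.sep_one by (simp add: complement_def)
next
  case (sep_dsum xs ys)
  then show ?case by (simp add: complement_dsum separable_is_perm separable.sep_skew)
next
  case (sep_skew xs ys)
  then show ?case by (simp add: complement_skewsum separable_is_perm separable.sep_dsum)
qed

lemma asc_complement: "is_perm xs \<Longrightarrow> asc (complement xs) = des xs"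
  unfolding asc_eq_adj_count des_eq_adj_count complement_def
  by (rule adj_count_map) (auto dest: is_perm_bounds)

lemma des_complement: "is_perm xs \<Longrightarrow> des (complement xs) = asc xs"
  unfolding asc_eq_adj_count des_eq_adj_count complement_def
  by (rule adj_count_map) (auto dest: is_perm_bounds)

lemma separable_irreducible_or_complement_irreducible:
  assumes "separable xs"
  shows "irreducible_perm xs \<or> irreducible_perm (complement xs)"
  using assms
proof (cases rule: separable.cases)
  case sep_one
  then show ?thesis by (simp add: irreducible_perm_def)
next
  case (sep_dsum u v)
  then have "irreducible_perm (skewsum (complement u) (complement v))"
    by (intro skewsum_irreducible)
       (simp_all add: separable_is_perm separable_not_Nil separable_complement)
  then show ?thesis by (simp add: sep_dsum complement_dsum separable_is_perm)
next
  case (sep_skew u v)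
  then show ?thesis by (simp add: skewsum_irreducible separable_is_perm separable_not_Nil)
qed

lemma separable_irreducible_complement_eq_one:
  assumes "separable xs" "irreducible_perm xs" "irreducible_perm (complement xs)"
  shows "xs = [1]"
  using assms(1)
proof (cases rule: separable.cases)
  case sep_one
  then show ?thesis .
next
  case (sep_dsum u v)
  then show ?thesis
    using assms(2) by (simp add: dsum_not_irreducible separable_is_perm separable_not_Nil)
next
  case (sep_skew u v)
  then have "\<not> irreducible_perm (dsum (complement u) (complement v))"
    by (intro dsum_not_irreducible)
       (simp_all add: separable_is_perm separable_not_Nil separable_complement)
  then show ?thesis
    using assms(3) by (simp add: sep_skew complement_skewsum separable_is_perm)
qed

definition weight :: "'a::comm_ring_1 \<Rightarrow> 'a \<Rightarrow> nat list \<Rightarrow> 'a" where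
  "weight p q xs = p ^ asc xs * q ^ des xs"

definition sep_perms :: "nat \<Rightarrow> nat list set" where
  "sep_perms n = {xs. separable xs \<and> length xs = n}"

definition irr_sep_perms :: "nat \<Rightarrow> nat list set" where
  "irr_sep_perms n = {xs. separable xs \<and> irreducible_perm xs \<and> length xs = n}"

definition red_sep_perms :: "nat \<Rightarrow> nat list set" where
  "red_sep_perms n = {xs. separable xs \<and> \<not> irreducible_perm xs \<and> length xs = n}"

lemma finite_sep_perms: "finite (sep_perms n)"
proof (rule finite_subset)
  show "sep_perms n \<subseteq> {xs. set xs \<subseteq> {1..n} \<and> length xs = n}"
    unfolding sep_perms_def using separable_is_perm by (auto simp: is_perm_def)
qed (simp add: finite_lists_length_eq)

lemma finite_irr_sep_perms: "finite (irr_sep_perms n)"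
  by (rule finite_subset[OF _ finite_sep_perms[of n]]) (auto simp: sep_perms_def irr_sep_perms_def)

lemma finite_red_sep_perms: "finite (red_sep_perms n)"
  by (rule finite_subset[OF _ finite_sep_perms[of n]]) (auto simp: sep_perms_def red_sep_perms_def)

lemma sep_gf_nth: "sep_gf p q $ n = sum (weight p q) (sep_perms n)"
  by (simp add: sep_gf_def weight_def sep_perms_def)

lemma irr_sep_gf_nth: "irr_sep_gf p q $ n = sum (weight p q) (irr_sep_perms n)"
  by (simp add: irr_sep_gf_def weight_def irr_sep_perms_def)

lemma weight_dsum:
  "separable xs \<Longrightarrow> separable ys \<Longrightarrow> weight p q (dsum xs ys) = p * weight p q xs * weight p q ys"
  by (simp add: weight_def asc_dsum des_dsum separable_is_perm separable_not_Nil power_add algebra_simps)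

lemma weight_complement: "is_perm xs \<Longrightarrow> weight p q (complement xs) = weight q p xs"
  by (simp add: weight_def asc_complement des_complement mult.commute)

lemma bij_betw_dsum_reducible:
  "bij_betw (\<lambda>(a, b). dsum a b) (\<Union>k\<in>{0..n}. irr_sep_perms k \<times> sep_perms (n - k))
     (red_sep_perms n)"
proof (rule bij_betwI')
  fix x y
  assume "x \<in> (\<Union>k\<in>{0..n}. irr_sep_perms k \<times> sep_perms (n - k))"
    and "y \<in> (\<Union>k\<in>{0..n}. irr_sep_perms k \<times> sep_perms (n - k))"
  moreover obtain a b a' b' where xy: "x = (a, b)" "y = (a', b')" by fastforce
  ultimately have "irreducible_perm a" "irreducible_perm a'" "separable a" "separable a'"
    "separable b" "separable b'"
    by (auto simp: irr_sep_perms_def sep_perms_def)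
  then show "((case x of (a, b) \<Rightarrow> dsum a b) = (case y of (a, b) \<Rightarrow> dsum a b)) = (x = y)"
    using dsum_irreducible_inject[of a a' b b'] xy by (auto simp: separable_is_perm)
next
  fix x
  assume "x \<in> (\<Union>k\<in>{0..n}. irr_sep_perms k \<times> sep_perms (n - k))"
  then obtain a b where "x = (a, b)" "separable a" "irreducible_perm a" "separable b"
      "length a + length b = n"
    by (auto simp: irr_sep_perms_def sep_perms_def)
  moreover have "\<not> irreducible_perm (dsum a b)"
    using \<open>separable a\<close> \<open>separable b\<close>
    by (intro dsum_not_irreducible) (simp_all add: separable_is_perm separable_not_Nil)
  ultimately show "(case x of (a, b) \<Rightarrow> dsum a b) \<in> red_sep_perms n"
    by (simp add: red_sep_perms_def separable.sep_dsum) (simp add: dsum_def)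
next
  fix xs
  assume "xs \<in> red_sep_perms n"
  then obtain a b where "separable a" "irreducible_perm a" "separable b" "xs = dsum a b"
      "length xs = n"
    unfolding red_sep_perms_def by (auto elim: separable_not_irreducible_dsum)
  then show "\<exists>x\<in>(\<Union>k\<in>{0..n}. irr_sep_perms k \<times> sep_perms (n - k)). xs = (case x of (a, b) \<Rightarrow> dsum a b)"
    by (intro bexI[of _ "(a, b)"]) (auto simp: irr_sep_perms_def sep_perms_def dsum_def)
qed

lemma sum_weight_reducible:
  "sum (weight p q) (red_sep_perms n)
     = p * (\<Sum>k=0..n. sum (weight p q) (irr_sep_perms k) * sum (weight p q) (sep_perms (n - k)))"
proof -
  let ?pairs = "\<Union>k\<in>{0..n}. irr_sep_perms k \<times> sep_perms (n - k)"
  have "(\<Sum>k=0..n. sum (weight p q) (irr_sep_perms k) * sum (weight p q) (sep_perms (n - k)))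
      = (\<Sum>k=0..n. \<Sum>(a, b)\<in>irr_sep_perms k \<times> sep_perms (n - k). weight p q a * weight p q b)"
    by (simp only: sum_product sum.cartesian_product)
  also have "\<dots> = (\<Sum>(a, b)\<in>?pairs. weight p q a * weight p q b)"
    by (rule sum.UNION_disjoint[symmetric])
       (simp_all add: finite_irr_sep_perms finite_sep_perms, auto simp: irr_sep_perms_def)
  finally have products: "(\<Sum>k=0..n. sum (weight p q) (irr_sep_perms k) * sum (weight p q) (sep_perms (n - k)))
      = (\<Sum>(a, b)\<in>?pairs. weight p q a * weight p q b)" .
  have "p * (\<Sum>(a, b)\<in>?pairs. weight p q a * weight p q b) = (\<Sum>(a, b)\<in>?pairs. weight p q (dsum a b))"
    unfolding sum_distrib_left
    by (intro sum.cong) (auto simp: irr_sep_perms_def sep_perms_def weight_dsum mult.assoc)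
  also have "\<dots> = sum (weight p q) (red_sep_perms n)"
    using sum.reindex_bij_betw[OF bij_betw_dsum_reducible, of "weight p q" n]
    by (simp add: case_prod_unfold)
  finally show ?thesis by (simp only: products)
qed

lemma sep_gf_decomposition: "sep_gf p q = irr_sep_gf p q + fps_const p * irr_sep_gf p q * sep_gf p q"
proof (rule fps_ext)
  fix n
  have "sep_perms n = irr_sep_perms n \<union> red_sep_perms n"
    "irr_sep_perms n \<inter> red_sep_perms n = {}"
    by (auto simp: sep_perms_def irr_sep_perms_def red_sep_perms_def)
  then have "sum (weight p q) (sep_perms n)
      = sum (weight p q) (irr_sep_perms n) + sum (weight p q) (red_sep_perms n)"
    by (simp add: sum.union_disjoint finite_irr_sep_perms finite_red_sep_perms)
  moreover have "(fps_const p * irr_sep_gf p q * sep_gf p q) $ n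
      = p * (\<Sum>k=0..n. irr_sep_gf p q $ k * sep_gf p q $ (n - k))"
    unfolding mult.assoc fps_mult_left_const_nth by (simp only: fps_mult_nth)
  ultimately show "sep_gf p q $ n = (irr_sep_gf p q + fps_const p * irr_sep_gf p q * sep_gf p q) $ n"
    by (simp add: sep_gf_nth irr_sep_gf_nth sum_weight_reducible)
qed

lemma sum_weight_complement_image:
  assumes "\<forall>xs\<in>A. is_perm xs"
  shows "sum (weight p q) (complement ` A) = sum (weight q p) A"
proof -
  have "inj_on complement A"
    by (rule inj_on_inverseI[where g = complement]) (simp add: assms complement_complement)
  then show ?thesis
    using assms by (simp add: sum.reindex weight_complement)
qed

lemma complement_image_eq:
  assumes "\<forall>xs\<in>A. complement xs \<in> B" "\<forall>xs\<in>B. is_perm xs \<and> complement xs \<in> A"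
  shows "complement ` A = B"
proof
  show "complement ` A \<subseteq> B" using assms(1) by blast
  show "B \<subseteq> complement ` A"
  proof
    fix xs assume "xs \<in> B"
    then have "xs = complement (complement xs)" "complement xs \<in> A"
      using assms(2) by (simp_all add: complement_complement)
    then show "xs \<in> complement ` A" by (rule image_eqI)
  qed
qed

lemma sep_gf_swap: "sep_gf q p = sep_gf p q"
proof (rule fps_ext)
  fix n
  have "complement ` sep_perms n = sep_perms n"
    by (intro complement_image_eq) (simp_all add: sep_perms_def separable_is_perm separable_complement)
  then show "sep_gf q p $ n = sep_gf p q $ n"
    using sum_weight_complement_image[of "sep_perms n" p q]
    by (simp add: sep_gf_nth sep_perms_def separable_is_perm)
qed

lemma irr_sep_gf_add_swap: "irr_sep_gf p q + irr_sep_gf q p = sep_gf p q + fps_X"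
proof (rule fps_ext)
  fix n
  let ?coirr = "{xs \<in> sep_perms n. irreducible_perm (complement xs)}"
  have "complement ` irr_sep_perms n = ?coirr"
    by (intro complement_image_eq)
       (simp_all add: sep_perms_def irr_sep_perms_def separable_is_perm separable_complement
         complement_complement)
  then have coirr: "sum (weight q p) (irr_sep_perms n) = sum (weight p q) ?coirr"
    using sum_weight_complement_image[of "irr_sep_perms n" p q]
    by (simp add: irr_sep_perms_def separable_is_perm)
  have "irr_sep_perms n \<union> ?coirr = sep_perms n"
    using separable_irreducible_or_complement_irreducible
    by (auto simp: irr_sep_perms_def sep_perms_def)
  moreover have "irr_sep_perms n \<inter> ?coirr = {xs. xs = [1] \<and> length xs = n}"
  proof (intro set_eqI iffI)
    fix xs :: "nat list"
    assume "xs \<in> irr_sep_perms n \<inter> ?coirr"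
    then show "xs \<in> {xs. xs = [1] \<and> length xs = n}"
      using separable_irreducible_complement_eq_one[of xs]
      by (simp add: irr_sep_perms_def sep_perms_def)
  next
    fix xs :: "nat list"
    assume "xs \<in> {xs. xs = [1] \<and> length xs = n}"
    moreover have "complement [1] = [1]" "irreducible_perm [1]"
      by (simp_all add: complement_def irreducible_perm_def)
    ultimately show "xs \<in> irr_sep_perms n \<inter> ?coirr"
      using separable.sep_one by (auto simp: irr_sep_perms_def sep_perms_def)
  qed
  moreover have "sum (weight p q) {xs. xs = [1] \<and> length xs = n} = (if n = 1 then 1 else 0)"
  proof -
    have "{xs :: nat list. xs = [1] \<and> length xs = n} = (if n = 1 then {[1]} else {})"
      by auto
    then show ?thesis by (simp add: weight_def asc_def des_def)
  qed
  ultimately have "sum (weight p q) (irr_sep_perms n) + sum (weight p q) ?coirr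
      = sum (weight p q) (sep_perms n) + (if n = 1 then 1 else 0)"
    using sum.union_inter[OF finite_irr_sep_perms, of ?coirr "weight p q" n]
    by (simp add: finite_sep_perms)
  then show "(irr_sep_gf p q + irr_sep_gf q p) $ n = (sep_gf p q + fps_X) $ n"
    by (simp add: irr_sep_gf_nth sep_gf_nth coirr)
qed

lemma sep_gf_nth_0: "sep_gf p q $ 0 = 0"
proof -
  have "sep_perms 0 = {}"
    using separable_not_Nil by (auto simp: sep_perms_def)
  then show ?thesis by (simp add: sep_gf_nth)
qed

lemma cubic_eq_of_decompositions:
  fixes S I J X P Q :: "'a::comm_ring_1"
  assumes "S = I + P * I * S" "S = J + Q * J * S" "I + J = S + X"
  shows "P * Q * S ^ 3 + P * Q * X * S ^ 2 + S * ((P + Q) * X - 1) + X = 0"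
proof -
  have "(S + X) * (1 + P * S) * (1 + Q * S)
      = I * (1 + P * S) * (1 + Q * S) + J * (1 + Q * S) * (1 + P * S)"
    using assms(3) by (simp add: algebra_simps flip: assms(3))
  also have "\<dots> = S * (1 + Q * S) + S * (1 + P * S)"
    using assms(1,2) by (simp add: algebra_simps flip: assms(1,2))
  finally show ?thesis
    by (simp add: algebra_simps power2_eq_square power3_eq_cube)
qed

lemma mult_eq_of_decompositions:
  fixes S I J X Q :: "'a::comm_ring_1"
  assumes "S = J + Q * J * S" "I + J = S + X"
  shows "I * (1 + Q * S) = X + Q * (X + S) * S"
proof -
  have "I * (1 + Q * S) = (S + X) * (1 + Q * S) - J * (1 + Q * S)"
    using assms(2) by (simp add: algebra_simps flip: assms(2))
  also have "\<dots> = (S + X) * (1 + Q * S) - S"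
    using assms(1) by (simp add: algebra_simps flip: assms(1))
  finally show ?thesis by (simp add: algebra_simps)
qed

theorem theorem4:
  fixes p q :: "'a::field"
  shows "fps_const (p * q) * sep_gf p q ^ 3
           + fps_const (p * q) * fps_X * sep_gf p q ^ 2
           + sep_gf p q * ((fps_const p + fps_const q) * fps_X - 1) + fps_X = 0 \<and>
         irr_sep_gf p q =
           (fps_X + fps_const q * (fps_X + sep_gf p q) * sep_gf p q)
             / (1 + fps_const q * sep_gf p q)"
proof
  have dec_p: "sep_gf p q = irr_sep_gf p q + fps_const p * irr_sep_gf p q * sep_gf p q"
    by (rule sep_gf_decomposition)
  have dec_q: "sep_gf p q = irr_sep_gf q p + fps_const q * irr_sep_gf q p * sep_gf p q"
    using sep_gf_decomposition[of q p] by (simp only: sep_gf_swap)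
  have split: "irr_sep_gf p q + irr_sep_gf q p = sep_gf p q + fps_X"
    by (rule irr_sep_gf_add_swap)
  show "fps_const (p * q) * sep_gf p q ^ 3
           + fps_const (p * q) * fps_X * sep_gf p q ^ 2
           + sep_gf p q * ((fps_const p + fps_const q) * fps_X - 1) + fps_X = 0"
    using cubic_eq_of_decompositions[OF dec_p dec_q split] by (simp add: fps_const_mult)
  have "(1 + fps_const q * sep_gf p q) $ 0 \<noteq> 0"
    by (simp add: sep_gf_nth_0)
  then have "1 + fps_const q * sep_gf p q \<noteq> 0"
    by (rule contrapos_nn) simp
  then have "irr_sep_gf p q = irr_sep_gf p q * (1 + fps_const q * sep_gf p q)
      / (1 + fps_const q * sep_gf p q)"
    by (rule nonzero_mult_div_cancel_right[symmetric])
  then show "irr_sep_gf p q = (fps_X + fps_const q * (fps_X + sep_gf p q) * sep_gf p q)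
             / (1 + fps_const q * sep_gf p q)"
    by (simp only: mult_eq_of_decompositions[OF dec_q split])
qed

end
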